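(* Let $N=2n+2d-4$ and write $P(t)=\sum_{k=0}^{N}p_k t^k$ (some top coefficients possibly zero), each $p_k$ an affine-linear function of $(x,y)$. Let $\tilde P(t)=NP(t)-tP'(t)$ and define $$\Upsilon(x,y)=(-1)^{N(N-1)/2}\det S_{N-1,N-1}(\tilde P,P'),$$ where $\tilde P$ and $P'$ are regarded as polynomials of formal degree $N-1$. Then $\Upsilon$ is a polynomial in $x,y$ of total degree at most $4(n+d)-10$, and $\Upsilon(x,y)=0$ for every $(x,y)\in\mathbb R^2$ for which there exists $\phi\in(-\varkappa,\varkappa)$, $\phi\neq0$, with $g(\phi)=0$ and $g'(\phi)=0$ (derivative in $\phi$). In particular the portion of the arctic curve given parametrically by such double roots lies on the algebraic curve $\Upsilon(x,y)=0$ of degree at most $4(n+d)-10$.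
   Context: Fix $0<\eta<\pi/2$ and set $\alpha=\pi/(\pi-2\eta)$. Assume $\alpha=n/d$ with $n>d\ge 1$ coprime integers, so that $\eta=\frac{\pi}{2}\cdot\frac{n-d}{n}$. Fix $\lambda\in(\eta,\pi-\eta)$ and put $\varkappa=(\pi-\lambda-\eta)/2$. For real $x,y$ and $\phi\in(-\varkappa,\varkappa)$ let $$g(\phi)=\frac{x\sin2\eta}{\sin(\varkappa-\phi)\sin(\varkappa+2\eta-\phi)}+\frac{y\sin2\eta}{\sin(\varkappa+\phi)\sin(\varkappa+2\eta+\phi)}-\frac{\sin2\varkappa}{\sin(\varkappa+\phi)\sin(\varkappa-\phi)}+\frac{\alpha\sin2\alpha\varkappa}{\sin\alpha(\varkappa+\phi)\sin\alpha(\varkappa-\phi)}.$$ Define $\rho=\dfrac{\sin2\eta}{\sin\varkappa\,\sin(\varkappa+2\eta)}$, $v_k=\cot(\frac{\varkappa}{d}+\frac{\pi k}{d})$, $u_k=\cot(\frac{\varkappa}{d}+\frac{2\eta}{d}+\frac{\pi k}{d})$ ($k=0,\dots,d-1$), $w_j=\cot(\frac{\varkappa}{d}+\frac{\pi j}{n})$ ($j=0,\dots,n-1$), and $$R(t)=x\rho\frac{(t^2+1)^d}{\prod_{k}(t-v_k)(t-u_k)}+y\rho\frac{(t^2+1)^d}{\prod_{k}(t+v_k)(t+u_k)}-2\cot\varkappa\,\frac{(t^2+1)^d}{\prod_{k}(t-v_k)(t+v_k)}+2\alpha\cot(\alpha\varkappa)\,\frac{(t^2+1)^n}{\prod_{j}(t-w_j)(t+w_j)},$$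 so that $g(\phi)=R(\cot(\phi/d))$. Let $Q(t)=\prod_{j=0}^{n-1}(t-w_j)(t+w_j)\prod_{k=1}^{d-1}(t-v_k)(t+v_k)\prod_{k=0}^{d-2}(t-u_k)(t+u_k)$ and $P(t)=Q(t)R(t)/(t^2+1)^d$, a polynomial in $t$ of degree at most $2n+2d-4$. For polynomials $A(t)=\sum_{k=0}^{m_A}a_kt^k$, $B(t)=\sum_{k=0}^{m_B}b_kt^k$, the Sylvester matrix $S_{m_A,m_B}(A,B)$ is the $(m_A+m_B)\times(m_A+m_B)$ matrix whose first $m_B$ rows are the successive right shifts of $(a_0,a_1,\dots,a_{m_A},0,\dots,0)$ and whose last $m_A$ rows are the successive right shifts of $(b_0,b_1,\dots,b_{m_B},0,\dots,0)$. *)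

theory Defs
  imports Complex_Main "HOL-Computational_Algebra.Polynomial" "Jordan_Normal_Form.Determinant"
begin

definition alpha :: "real \<Rightarrow> real" where
  "alpha eta = pi / (pi - 2 * eta)"

definition kappa :: "real \<Rightarrow> real \<Rightarrow> real" where
  "kappa eta lam = (pi - lam - eta) / 2"

definition gfun :: "real \<Rightarrow> real \<Rightarrow> real \<Rightarrow> real \<Rightarrow> real \<Rightarrow> real" where
  "gfun eta lam x y phi =
     (let k = kappa eta lam; a = alpha eta in
        x * sin (2*eta) / (sin (k - phi) * sin (k + 2*eta - phi))
      + y * sin (2*eta) / (sin (k + phi) * sin (k + 2*eta + phi))
      - sin (2*k) / (sin (k + phi) * sin (k - phi))
      + a * sin (2*a*k) / (sin (a*(k + phi)) * sin (a*(k - phi))))"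

definition rho :: "real \<Rightarrow> real \<Rightarrow> real" where
  "rho eta lam = sin (2*eta) / (sin (kappa eta lam) * sin (kappa eta lam + 2*eta))"

definition vv :: "real \<Rightarrow> real \<Rightarrow> nat \<Rightarrow> nat \<Rightarrow> real" where
  "vv eta lam d k = cot (kappa eta lam / d + pi * k / d)"

definition uu :: "real \<Rightarrow> real \<Rightarrow> nat \<Rightarrow> nat \<Rightarrow> real" where
  "uu eta lam d k = cot (kappa eta lam / d + 2*eta / d + pi * k / d)"

definition ww :: "real \<Rightarrow> real \<Rightarrow> nat \<Rightarrow> nat \<Rightarrow> nat \<Rightarrow> real" where
  "ww eta lam n d j = cot (kappa eta lam / d + pi * j / n)"

definition lin_minus :: "real \<Rightarrow> real poly" where "lin_minus c = [:-c, 1:]"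
definition lin_plus :: "real \<Rightarrow> real poly" where "lin_plus c = [:c, 1:]"

definition Qpoly :: "real \<Rightarrow> real \<Rightarrow> nat \<Rightarrow> nat \<Rightarrow> real poly" where
  "Qpoly eta lam n d =
     (\<Prod>j<n. lin_minus (ww eta lam n d j) * lin_plus (ww eta lam n d j))
   * (\<Prod>k\<in>{1..<d}. lin_minus (vv eta lam d k) * lin_plus (vv eta lam d k))
   * (\<Prod>k<d-1. lin_minus (uu eta lam d k) * lin_plus (uu eta lam d k))"

text \<open>Denominators of the four summands of R(t).\<close>
definition D1 :: "real \<Rightarrow> real \<Rightarrow> nat \<Rightarrow> real poly" where
  "D1 eta lam d = (\<Prod>k<d. lin_minus (vv eta lam d k) * lin_minus (uu eta lam d k))"
definition D2 :: "real \<Rightarrow> real \<Rightarrow> nat \<Rightarrow> real poly" where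
  "D2 eta lam d = (\<Prod>k<d. lin_plus (vv eta lam d k) * lin_plus (uu eta lam d k))"
definition D3 :: "real \<Rightarrow> real \<Rightarrow> nat \<Rightarrow> real poly" where
  "D3 eta lam d = (\<Prod>k<d. lin_minus (vv eta lam d k) * lin_plus (vv eta lam d k))"
definition D4 :: "real \<Rightarrow> real \<Rightarrow> nat \<Rightarrow> nat \<Rightarrow> real poly" where
  "D4 eta lam n d = (\<Prod>j<n. lin_minus (ww eta lam n d j) * lin_plus (ww eta lam n d j))"

text \<open>P(t) = Q(t) R(t) / (t^2+1)^d, written term by term; each division
  Q / D_i is exact (Q contains every factor of D_i), so polynomial division
  computes the exact quotient.\<close>
definition Ppoly :: "real \<Rightarrow> real \<Rightarrow> nat \<Rightarrow> nat \<Rightarrow> real \<Rightarrow> real \<Rightarrow> real poly" where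
  "Ppoly eta lam n d x y =
     (let Q = Qpoly eta lam n d; k = kappa eta lam; a = alpha eta in
        smult (x * rho eta lam) (Q div D1 eta lam d)
      + smult (y * rho eta lam) (Q div D2 eta lam d)
      - smult (2 * cot k) (Q div D3 eta lam d)
      + smult (2 * a * cot (a * k)) ([:1, 0, 1:] ^ (n - d) * (Q div D4 eta lam n d)))"

definition sylvester :: "nat \<Rightarrow> nat \<Rightarrow> 'a::comm_ring_1 poly \<Rightarrow> 'a poly \<Rightarrow> 'a mat" where
  "sylvester mA mB A B = mat (mA + mB) (mA + mB) (\<lambda>(i, j).
     if i < mB then (if i \<le> j \<and> j - i \<le> mA then coeff A (j - i) else 0)
     else (if i - mB \<le> j \<and> j - (i - mB) \<le> mB then coeff B (j - (i - mB)) else 0))"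

definition Nn :: "nat \<Rightarrow> nat \<Rightarrow> nat" where "Nn n d = 2*n + 2*d - 4"

definition Upsilon :: "real \<Rightarrow> real \<Rightarrow> nat \<Rightarrow> nat \<Rightarrow> real \<Rightarrow> real \<Rightarrow> real" where
  "Upsilon eta lam n d x y =
     (let N = Nn n d; P = Ppoly eta lam n d x y;
          Pt = smult (of_nat N) P - [:0, 1:] * pderiv P in
      (-1) ^ (N * (N - 1) div 2) * det (sylvester (N - 1) (N - 1) Pt (pderiv P)))"

end

theory Submission
  imports Defs
begin

(* Write t = cot(phi/d).  The substitution phi -> t turns g into the rational function R, and the
   polynomial P is Q R / (t^2+1)^d.  The sine product formula makes the products of (t -+ v_k), (t -+ u_k)
       and (t -+ w_j) telescope to quotients of sines; hence P(cot(phi/d)) = Q(cot(phi/d))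
       sin(phi/d)^(2d) g(phi) for phi in (-kappa, kappa), phi <> 0, and a double root phi of g
       yields a double root t of P, hence a common root of P~ = N P - t P' and P'.
   (2) Sylvester matrices.  A common root of two polynomials of formal degrees mA, mB gives a
       nonzero kernel vector of S_{mA,mB}, so the determinant, and with it Upsilon, vanishes.
   (3) Degrees.  Every denominator D_i divides Q (this uses v_0 = w_0 and u_(d-1) = w_(n-1)),
       which gives deg P <= N and deg P~ <= N - 1.
   (4) Polynomiality.  The coefficients of P are affine in (x, y), hence so are those of P~ and
       P'; the Leibniz expansion of a Sylvester determinant of size 2N - 2 = 4(n+d) - 10 then
       is a polynomial of that total degree. *)

lemma cis_minus_cis_neg: "cis a - cis (- a) = 2 * \<i> * complex_of_real (sin a)"
  by (simp add: complex_eq_iff)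

lemma one_minus_cis_square: "1 - cis a * cis a = - cis a * (2 * \<i> * complex_of_real (sin a))"
  unfolding cis_mult mult_2[symmetric]
  by (simp add: complex_eq_iff cos_double_sin sin_double power2_eq_square)

lemma prod_cis: "(\<Prod>k\<in>A. cis (f k)) = cis (\<Sum>k\<in>A. f k)"
  by (induction A rule: infinite_finite_induct) (auto simp: cis_mult)

lemma prod_roots_of_unity:
  assumes m: "0 < m"
  shows "(\<Prod>k<m. (z::complex) - cis (2*pi*real k/real m)) = z ^ m - 1"
proof -
  let ?w = "\<lambda>k. cis (2*pi*real k/real m)"
  define p where "p = (\<Prod>k<m. [:- ?w k, 1:])"
  define q where "q = (monom (1::complex) m - 1)"
  have dp: "degree p = m" unfolding p_def
    by (subst degree_prod_sum_eq) auto
  have lp: "lead_coeff p = 1" unfolding p_def lead_coeff_prod by simp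
  have dq: "degree q \<le> m" unfolding q_def
    by (rule order_trans[OF degree_diff_le_max]) (auto simp: degree_monom_le)
  have "p = q"
  proof (rule poly_eqI_degree_lead_coeff[where n=m and A="{z. z^m = 1}"])
    show "coeff p m = coeff q m" using lp dp m by (simp add: q_def)
    show "m \<le> card {z::complex. z^m = 1}" using card_roots_unity_eq[OF m] by simp
    fix z :: complex assume z: "z \<in> {z. z^m = 1}"
    then obtain k where k: "k < m" "z = ?w k"
      using bij_betw_roots_unity[OF m] unfolding bij_betw_def by auto
    have "poly p z = 0" unfolding p_def poly_prod using k by (auto intro!: bexI[of _ k])
    moreover have "poly q z = 0" using z by (simp add: q_def poly_monom)
    ultimately show "poly p z = poly q z" by simp
  qed (use dp dq in auto)
  then have "poly p z = poly q z" by simp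
  then show ?thesis by (simp add: p_def q_def poly_prod poly_monom)
qed

lemma prod_one_minus_roots_of_unity:
  assumes m: "0 < m"
  shows "(\<Prod>k<m. 1 - u * cis (2*pi*real k/real m)) = 1 - u ^ m"
proof (cases "u = 0")
  case False
  have "(\<Prod>k<m. 1 - u * cis (2*pi*real k/real m))
      = (\<Prod>k<m. u * (inverse u - cis (2*pi*real k/real m)))"
    using False by (intro prod.cong) (auto simp: field_simps)
  also have "\<dots> = u ^ m * (inverse u ^ m - 1)"
    by (simp add: prod.distrib prod_roots_of_unity[OF m])
  also have "\<dots> = 1 - u ^ m" using False by (simp add: field_simps power_inverse)
  finally show ?thesis .
qed (use m in simp)

lemma sum_lessThan_real: "(\<Sum>k<m. real k) = real m * (real m - 1) / 2"
  by (induction m) (auto simp: field_simps)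

lemma two_i_sin_via_cis: "2 * \<i> * complex_of_real (sin a) = - cis (- a) * (1 - cis a * cis a)"
proof -
  have "cis (- a) * cis a = 1" by (simp add: cis_mult)
  then have "- cis (- a) * (1 - cis a * cis a) = cis a - cis (- a)" by (simp add: algebra_simps)
  then show ?thesis by (simp add: cis_minus_cis_neg)
qed

text \<open>Complex form of the sine product: writing each factor sin(th + pi k/m) through
  1 - u w^k, with u = e^(2 i th) and w = e^(2 pi i/m), the product over the roots of unity collapses.\<close>

lemma prod_sin_shifted_cis:
  assumes m: "0 < m"
  shows "(2 * \<i>) ^ m * complex_of_real (\<Prod>k<m. sin (th + pi * real k / real m))
       = (- 1) ^ m * cis (- (real m * th + pi * (real m - 1) / 2))
         * (1 - cis (real m * th) * cis (real m * th))"
proof -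
  define a where "a k = th + pi * real k / real m" for k
  define u where "u = cis th * cis th"
  have factor: "2 * \<i> * complex_of_real (sin (a k)) = - cis (- a k) * (1 - u * cis (2*pi*real k/real m))"
    for k
  proof -
    have "u * cis (2*pi*real k/real m) = cis (a k) * cis (a k)"
      by (simp add: u_def a_def cis_mult field_simps)
    then show ?thesis by (simp add: two_i_sin_via_cis)
  qed
  have sum_a: "(\<Sum>k<m. a k) = real m * th + pi * (real m - 1) / 2"
    using m by (simp add: a_def sum.distrib sum_divide_distrib[symmetric]
        sum_distrib_left[symmetric] sum_lessThan_real field_simps)
  have "(2 * \<i>) ^ m * complex_of_real (\<Prod>k<m. sin (a k))
      = (\<Prod>k<m. 2 * \<i> * complex_of_real (sin (a k)))"
    by (simp add: prod.distrib)
  also have "\<dots> = (\<Prod>k<m. (- 1) * (cis (- a k) * (1 - u * cis (2*pi*real k/real m))))"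
    by (simp add: factor)
  also have "\<dots> = (- 1) ^ m * (\<Prod>k<m. cis (- a k)) * (\<Prod>k<m. 1 - u * cis (2*pi*real k/real m))"
    by (simp only: prod.distrib prod_constant card_lessThan mult.assoc)
  also have "\<dots> = (- 1) ^ m * cis (- (\<Sum>k<m. a k)) * (1 - u ^ m)"
    by (simp add: prod_cis sum_negf prod_one_minus_roots_of_unity[OF m])
  finally show ?thesis
    unfolding sum_a by (simp add: a_def u_def power_mult_distrib DeMoivre)
qed

lemma sin_prod_formula:
  assumes m: "0 < m"
  shows "(\<Prod>k<m. sin (th + pi * real k / real m)) = sin (real m * th) / 2 ^ (m - 1)"
proof -
  obtain j where j: "m = Suc j" using m not0_implies_Suc by blast
  have quarter_turn: "cis (- (pi * real j / 2)) = (- \<i>) ^ j"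
  proof -
    have "cis (- (pi * real j / 2)) = cis (real j * (- pi / 2))" by (simp add: field_simps)
    also have "\<dots> = cis (- pi / 2) ^ j" by (rule DeMoivre[symmetric])
    finally show ?thesis by (simp add: complex_eq_iff)
  qed
  have signs: "(- 1::complex) ^ j * (- \<i>) ^ j = \<i> ^ j" by (simp flip: power_mult_distrib)
  have "(2 * \<i>) ^ m * complex_of_real (\<Prod>k<m. sin (th + pi * real k / real m))
      = (- 1) ^ m * (cis (- (real m * th + pi * real j / 2)) * cis (real m * th))
        * (- 2 * \<i> * complex_of_real (sin (real m * th)))"
    unfolding prod_sin_shifted_cis[OF m] one_minus_cis_square using j
    by (simp only: mult_ac mult_minus_left mult_minus_right) simp
  also have "\<dots> = (- 1) ^ m * (- \<i>) ^ j * (- 2 * \<i> * complex_of_real (sin (real m * th)))"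
    by (simp add: cis_mult quarter_turn)
  also have "\<dots> = (2 * \<i>) ^ m * complex_of_real (sin (real m * th) / 2 ^ j)"
    using signs by (simp add: j power_mult_distrib algebra_simps)
  finally have "complex_of_real (\<Prod>k<m. sin (th + pi * real k / real m))
      = complex_of_real (sin (real m * th) / 2 ^ j)"
    by (rule mult_left_cancel[THEN iffD1, rotated]) simp
  then show ?thesis using j by (simp only: of_real_eq_iff diff_Suc_1)
qed

lemma cot_diff: "sin b \<noteq> 0 \<Longrightarrow> sin c \<noteq> 0 \<Longrightarrow> cot b - cot c = sin (c - b) / (sin b * sin c)"
  by (simp add: cot_def sin_diff field_simps)

text \<open>Products of cotangent differences over equally spaced nodes telescope, via the sine
  product formula, to a single quotient of sines.\<close>

lemma prod_cot_diff:
  assumes m: "0 < m" and b: "sin b \<noteq> 0"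
    and c: "\<And>k. k < m \<Longrightarrow> sin (c + pi * real k / real m) \<noteq> 0"
  shows "(\<Prod>k<m. cot b - cot (c + pi * real k / real m))
       = sin (real m * (c - b)) / (sin b ^ m * sin (real m * c))"
proof -
  have "(\<Prod>k<m. cot b - cot (c + pi * real k / real m))
      = (\<Prod>k<m. sin ((c - b) + pi * real k / real m) / (sin b * sin (c + pi * real k / real m)))"
    using b c by (intro prod.cong refl) (simp add: cot_diff algebra_simps)
  also have "\<dots> = (\<Prod>k<m. sin ((c - b) + pi * real k / real m))
                 / (sin b ^ m * (\<Prod>k<m. sin (c + pi * real k / real m)))"
    by (simp add: prod_dividef prod.distrib)
  finally show ?thesis unfolding sin_prod_formula[OF m] by (simp add: field_simps)
qed

text \<open>The companion formula for sums, obtained from the previous one by b -> -b.\<close>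

lemma prod_cot_sum:
  assumes m: "0 < m" and b: "sin b \<noteq> 0"
    and c: "\<And>k. k < m \<Longrightarrow> sin (c + pi * real k / real m) \<noteq> 0"
  shows "(\<Prod>k<m. cot b + cot (c + pi * real k / real m))
       = sin (real m * (c + b)) / (sin b ^ m * sin (real m * c))"
proof -
  have "(\<Prod>k<m. cot b + cot (c + pi * real k / real m))
      = (\<Prod>k<m. (- 1) * (cot (- b) - cot (c + pi * real k / real m)))"
    by (simp add: cot_def add.commute)
  also have "\<dots> = (- 1) ^ m * (\<Prod>k<m. cot (- b) - cot (c + pi * real k / real m))"
    by (simp only: prod.distrib prod_constant card_lessThan)
  also have "\<dots> = (- 1) ^ m * (sin (real m * (c - - b)) / (sin (- b) ^ m * sin (real m * c)))"
    by (subst prod_cot_diff[OF m _ c]) (use b in simp_all)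
  also have "\<dots> = sin (real m * (c + b)) / (sin b ^ m * sin (real m * c))"
  proof -
    have "(- 1) ^ m * (- 1) ^ m = (1::real)" by (simp flip: power_mult_distrib)
    then show ?thesis by (simp add: power_minus[of "sin b"])
  qed
  finally show ?thesis .
qed

lemma sin_shift_nonzero:
  assumes c: "0 < c" "c < pi / real m" and k: "k < m"
  shows "sin (c + pi * real k / real m) \<noteq> 0"
proof -
  have m: "0 < real m" using k by simp
  have "c + pi * real k / real m < pi / real m + pi * real k / real m" using c by simp
  also have "\<dots> = pi * (real k + 1) / real m" by (simp add: add_divide_distrib distrib_left)
  also have "\<dots> \<le> pi"
    using k m by (simp add: divide_le_eq_1 pos_divide_le_eq)
  finally have "c + pi * real k / real m < pi" .
  moreover have "0 < c + pi * real k / real m" using c by (simp add: add_pos_nonneg)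
  ultimately show ?thesis using sin_gt_zero by fastforce
qed

lemma prod_cot_shifted:
  assumes c: "0 < c" "c < pi / real m" and b: "sin b \<noteq> 0"
  shows "(\<Prod>k<m. cot b - cot (c + pi * real k / real m))
           = sin (real m * (c - b)) / (sin b ^ m * sin (real m * c))"
    and "(\<Prod>k<m. cot b + cot (c + pi * real k / real m))
           = sin (real m * (c + b)) / (sin b ^ m * sin (real m * c))"
proof -
  have m: "0 < m"
  proof (rule ccontr)
    assume "\<not> 0 < m"
    then show False using c by simp
  qed
  show "(\<Prod>k<m. cot b - cot (c + pi * real k / real m))
           = sin (real m * (c - b)) / (sin b ^ m * sin (real m * c))"
    by (rule prod_cot_diff[OF m b sin_shift_nonzero[OF c]])
  show "(\<Prod>k<m. cot b + cot (c + pi * real k / real m))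
           = sin (real m * (c + b)) / (sin b ^ m * sin (real m * c))"
    by (rule prod_cot_sum[OF m b sin_shift_nonzero[OF c]])
qed

text \<open>A row of the Sylvester matrix applied to the vector (1, t, t^2, ...) gives a shifted
  evaluation of the corresponding polynomial.\<close>

lemma sum_shifted_coeffs:
  fixes t :: "'a::comm_ring_1"
  assumes "i + K < L"
  shows "(\<Sum>j<L. (if i \<le> j \<and> j - i \<le> K then c (j - i) else 0) * t ^ j)
       = t ^ i * (\<Sum>k\<le>K. c k * t ^ k)"
proof -
  have "t ^ i * (\<Sum>k\<le>K. c k * t ^ k) = (\<Sum>k\<le>K. c ((i + k) - i) * t ^ (i + k))"
    by (simp add: sum_distrib_left power_add mult_ac)
  also have "\<dots> = (\<Sum>j\<in>(\<lambda>k. i + k) ` {..K}. c (j - i) * t ^ j)"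
    by (subst sum.reindex) (auto simp: inj_on_def)
  also have "\<dots> = (\<Sum>j<L. (if i \<le> j \<and> j - i \<le> K then c (j - i) else 0) * t ^ j)"
  proof (rule sum.mono_neutral_cong_left)
    show "(\<lambda>k. i + k) ` {..K} \<subseteq> {..<L}" using assms by auto
    have "\<not> (i \<le> j \<and> j - i \<le> K)" if "j \<notin> (\<lambda>k. i + k) ` {..K}" for j
      using that by (metis atMost_iff image_eqI le_add_diff_inverse)
    then show "\<forall>j\<in>{..<L} - (\<lambda>k. i + k) ` {..K}.
        (if i \<le> j \<and> j - i \<le> K then c (j - i) else 0) * t ^ j = 0" by auto
  qed auto
  finally show ?thesis by simp
qed

lemma poly_as_sum_upto:
  fixes A :: "'a::comm_ring_1 poly"
  assumes "degree A \<le> K"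
  shows "poly A t = (\<Sum>k\<le>K. coeff A k * t ^ k)"
proof -
  have "(\<Sum>k\<le>K. coeff A k * t ^ k) = (\<Sum>k\<le>degree A. coeff A k * t ^ k)"
    using assms by (intro sum.mono_neutral_right) (auto simp: coeff_eq_0)
  then show ?thesis using poly_altdef[of A t] by simp
qed

text \<open>A common root t of A and B makes (1, t, ..., t^(mA+mB-1)) a kernel vector of the
  Sylvester matrix, so its determinant vanishes (for any formal degrees bounding the true ones).\<close>

lemma sylvester_det_common_root:
  fixes A B :: "'a::idom poly"
  assumes dA: "degree A \<le> mA" and dB: "degree B \<le> mB"
    and zA: "poly A t = 0" and zB: "poly B t = 0" and pos: "0 < mA + mB"
  shows "det (sylvester mA mB A B) = 0"
proof -
  let ?L = "mA + mB"
  let ?M = "sylvester mA mB A B"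
  define v where "v = vec ?L (\<lambda>j. t ^ j)"
  have v_nonzero: "v \<noteq> 0\<^sub>v ?L"
  proof
    assume "v = 0\<^sub>v ?L"
    then have "v $ 0 = 0\<^sub>v ?L $ 0" by simp
    then show False using pos by (simp add: v_def)
  qed
  have "?M *\<^sub>v v = 0\<^sub>v ?L"
  proof (rule eq_vecI)
    fix i assume "i < dim_vec (0\<^sub>v ?L :: 'a vec)"
    then have i: "i < ?L" by simp
    have row: "(?M *\<^sub>v v) $ i = (\<Sum>j<?L. ?M $$ (i, j) * t ^ j)"
      using i by (simp add: mult_mat_vec_def scalar_prod_def v_def sylvester_def lessThan_atLeast0)
    show "(?M *\<^sub>v v) $ i = 0\<^sub>v ?L $ i"
    proof (cases "i < mB")
      case True
      then have "(\<Sum>j<?L. ?M $$ (i, j) * t ^ j) = t ^ i * (\<Sum>k\<le>mA. coeff A k * t ^ k)"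
        using i by (simp add: sylvester_def sum_shifted_coeffs)
      then show ?thesis using i row zA poly_as_sum_upto[OF dA, of t] by simp
    next
      case False
      then have "(\<Sum>j<?L. ?M $$ (i, j) * t ^ j) = (\<Sum>j<?L.
          (if i - mB \<le> j \<and> j - (i - mB) \<le> mB then coeff B (j - (i - mB)) else 0) * t ^ j)"
        using i by (intro sum.cong refl) (simp add: sylvester_def)
      also have "\<dots> = t ^ (i - mB) * (\<Sum>k\<le>mB. coeff B k * t ^ k)"
        using False i by (intro sum_shifted_coeffs) simp
      finally have "(\<Sum>j<?L. ?M $$ (i, j) * t ^ j) = t ^ (i - mB) * (\<Sum>k\<le>mB. coeff B k * t ^ k)" .
      then show ?thesis using i row zB poly_as_sum_upto[OF dB, of t] by simp
    qed
  qed (simp add: sylvester_def)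
  moreover have "?M \<in> carrier_mat ?L ?L" by (simp add: sylvester_def)
  moreover have "v \<in> carrier_vec ?L" by (simp add: v_def)
  ultimately show ?thesis using det_0_iff_vec_prod_zero v_nonzero by blast
qed

text \<open>If deg P <= N then the Euler-type combination N P - t P' has degree at most N - 1,
  because its coefficient of t^N is (N - N) p_N.\<close>

lemma degree_euler_combination:
  fixes P :: "'a::idom poly"
  assumes "degree P \<le> N"
  shows "degree (smult (of_nat N) P - [:0, 1:] * pderiv P) \<le> N - 1"
proof (rule degree_le, intro allI impI)
  fix i assume i: "N - 1 < i"
  have "coeff (smult (of_nat N) P - [:0, 1:] * pderiv P) i = (of_nat N - of_nat i) * coeff P i"
    using i by (cases i) (auto simp: coeff_pderiv algebra_simps)
  also have "\<dots> = 0"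
    using assms i by (cases "i = N") (auto simp: coeff_eq_0)
  finally show "coeff (smult (of_nat N) P - [:0, 1:] * pderiv P) i = 0" .
qed

lemma prod_split_first:
  fixes m :: nat
  assumes "0 < m" shows "(\<Prod>k<m. f k) = f 0 * (\<Prod>k\<in>{1..<m}. f k)"
proof -
  have "{..<m} = insert 0 {1..<m}" using assms by (auto simp: Suc_le_eq)
  then show ?thesis by simp
qed

lemma prod_split_last: "0 < (m::nat) \<Longrightarrow> (\<Prod>k<m. f k) = f (m - 1) * (\<Prod>k<m - 1. f k)"
  by (metis Suc_pred' prod.lessThan_Suc mult.commute)

lemma two_factors_dvd_prod:
  assumes "finite I" "i \<in> I" "j \<in> I" "i \<noteq> j"
  shows "f i * f j dvd (\<Prod>k\<in>I. f k)"
proof -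
  have "(\<Prod>k\<in>I. f k) = f i * (f j * (\<Prod>k\<in>I - {i} - {j}. f k))"
    using assms by (simp add: prod.remove[of I i] prod.remove[of "I - {i}" j])
  then show ?thesis by (metis dvd_triv_left mult.assoc)
qed

lemma degree_exact_quotient:
  fixes D Q :: "'a::field poly"
  assumes "D dvd Q" "Q \<noteq> 0"
  shows "degree (Q div D) = degree Q - degree D"
proof -
  obtain E where E: "Q = D * E" using assms(1) by (auto simp: dvd_def)
  with assms(2) have "D \<noteq> 0" "E \<noteq> 0" by auto
  with E show ?thesis by (simp add: degree_mult_eq)
qed

lemma poly_exact_quotient:
  fixes D Q :: "'a::field poly"
  assumes "D dvd Q" "poly D t \<noteq> 0"
  shows "poly (Q div D) t = poly Q t / poly D t"
  using assms by (metis dvd_mult_div_cancel nonzero_eq_divide_eq poly_mult mult.commute)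

lemma poly_lin_minus [simp]: "poly (lin_minus c) t = t - c"
  and poly_lin_plus [simp]: "poly (lin_plus c) t = t + c"
  and lin_minus_nonzero [simp]: "lin_minus c \<noteq> 0"
  and lin_plus_nonzero [simp]: "lin_plus c \<noteq> 0"
  and degree_lin_minus [simp]: "degree (lin_minus c) = 1"
  and degree_lin_plus [simp]: "degree (lin_plus c) = 1"
  by (simp_all add: lin_minus_def lin_plus_def)

lemma DERIV_poly_cot:
  assumes "sin (x / c) \<noteq> 0"
  shows "((\<lambda>y. poly p (cot (y / c))) has_real_derivative
           poly (pderiv p) (cot (x / c)) * (- inverse (sin (x / c) ^ 2) * (1 / c))) (at x)"
proof -
  have "((\<lambda>y. y / c) has_real_derivative 1 / c) (at x)"
    using assms by (cases "c = 0") (auto intro!: derivative_eq_intros)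
  from DERIV_chain2[OF DERIV_cot[OF assms] this]
  show ?thesis by (rule DERIV_chain2[OF poly_DERIV])
qed

lemma DERIV_zero_product:
  assumes g: "(g has_real_derivative 0) (at x)" "g x = 0" and h: "h differentiable (at x)"
    and S: "open S" "x \<in> S" and F: "\<And>y. y \<in> S \<Longrightarrow> F y = g y * h y"
  shows "(F has_real_derivative 0) (at x)"
proof -
  obtain h' where "(h has_real_derivative h') (at x)"
    using h by (auto simp: real_differentiable_def)
  from DERIV_mult[OF g(1) this] have "((\<lambda>y. g y * h y) has_real_derivative 0) (at x)"
    using g(2) by simp
  then show ?thesis
    by (rule has_field_derivative_transform_within_open[OF _ S]) (simp add: F)
qed

definition monomial_exps :: "nat \<Rightarrow> (nat \<times> nat) set" where
  "monomial_exps m = {p. fst p + snd p \<le> m}"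

lemma finite_monomial_exps: "finite (monomial_exps m)"
  by (rule finite_subset[of _ "{..m} \<times> {..m}"]) (auto simp: monomial_exps_def)

definition bipoly :: "nat \<Rightarrow> (real \<Rightarrow> real \<Rightarrow> real) \<Rightarrow> bool" where
  "bipoly m f \<longleftrightarrow> (\<exists>c. \<forall>x y. f x y = (\<Sum>p\<in>monomial_exps m. c p * x ^ fst p * y ^ snd p))"

lemma bipolyI:
  assumes "finite S" "\<And>s. s \<in> S \<Longrightarrow> fst (e s) + snd (e s) \<le> m"
    and "\<And>x y. f x y = (\<Sum>s\<in>S. k s * x ^ fst (e s) * y ^ snd (e s))"
  shows "bipoly m f"
  unfolding bipoly_def
proof (intro exI allI)
  fix x y :: real
  have "(\<Sum>p\<in>monomial_exps m. (\<Sum>s\<in>{s\<in>S. e s = p}. k s) * x ^ fst p * y ^ snd p)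
      = (\<Sum>p\<in>monomial_exps m. (\<Sum>s\<in>{s\<in>S. e s = p}. k s * x ^ fst (e s) * y ^ snd (e s)))"
    by (intro sum.cong refl) (auto simp: sum_distrib_right)
  also have "\<dots> = (\<Sum>s\<in>S. k s * x ^ fst (e s) * y ^ snd (e s))"
    using assms by (intro sum.group finite_monomial_exps) (auto simp: monomial_exps_def)
  finally show "f x y = (\<Sum>p\<in>monomial_exps m. (\<Sum>s\<in>{s\<in>S. e s = p}. k s) * x ^ fst p * y ^ snd p)"
    using assms(3) by simp
qed

lemma bipoly_add:
  assumes "bipoly m f" "bipoly m g"
  shows "bipoly m (\<lambda>x y. f x y + g x y)"
proof -
  obtain c where c: "\<And>x y. f x y = (\<Sum>p\<in>monomial_exps m. c p * x ^ fst p * y ^ snd p)"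
    using assms(1) unfolding bipoly_def by blast
  obtain c' where c': "\<And>x y. g x y = (\<Sum>p\<in>monomial_exps m. c' p * x ^ fst p * y ^ snd p)"
    using assms(2) unfolding bipoly_def by blast
  show ?thesis unfolding bipoly_def
    by (rule exI[of _ "\<lambda>p. c p + c' p"]) (simp add: c c' sum.distrib[symmetric] algebra_simps)
qed

lemma bipoly_mult:
  assumes "bipoly a f" "bipoly b g"
  shows "bipoly (a + b) (\<lambda>x y. f x y * g x y)"
proof -
  obtain c where c: "\<And>x y. f x y = (\<Sum>p\<in>monomial_exps a. c p * x ^ fst p * y ^ snd p)"
    using assms(1) unfolding bipoly_def by blast
  obtain c' where c': "\<And>x y. g x y = (\<Sum>q\<in>monomial_exps b. c' q * x ^ fst q * y ^ snd q)"
    using assms(2) unfolding bipoly_def by blast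
  define e :: "(nat \<times> nat) \<times> (nat \<times> nat) \<Rightarrow> nat \<times> nat"
    where "e = (\<lambda>(p, q). (fst p + fst q, snd p + snd q))"
  show ?thesis
  proof (rule bipolyI[where S="monomial_exps a \<times> monomial_exps b" and e=e and k="\<lambda>(p, q). c p * c' q"])
    show "finite (monomial_exps a \<times> monomial_exps b)" by (simp add: finite_monomial_exps)
    show "fst (e s) + snd (e s) \<le> a + b" if "s \<in> monomial_exps a \<times> monomial_exps b" for s
      using that by (auto simp: e_def monomial_exps_def)
    fix x y :: real
    have "f x y * g x y = (\<Sum>(p, q)\<in>monomial_exps a \<times> monomial_exps b.
        (c p * x ^ fst p * y ^ snd p) * (c' q * x ^ fst q * y ^ snd q))"
      by (simp add: c c' sum_product sum.cartesian_product)
    also have "\<dots> = (\<Sum>s\<in>monomial_exps a \<times> monomial_exps b.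
        (\<lambda>(p, q). c p * c' q) s * x ^ fst (e s) * y ^ snd (e s))"
      by (intro sum.cong refl) (auto simp: e_def power_add)
    finally show "f x y * g x y = \<dots>" .
  qed
qed

lemma bipoly_const: "bipoly m (\<lambda>x y. c)"
  by (rule bipolyI[where S="{()}" and e="\<lambda>_. (0, 0)" and k="\<lambda>_. c"]) auto

lemma bipoly_x: "bipoly 1 (\<lambda>x y. x)"
  by (rule bipolyI[where S="{()}" and e="\<lambda>_. (1, 0)" and k="\<lambda>_. 1"]) auto

lemma bipoly_y: "bipoly 1 (\<lambda>x y. y)"
  by (rule bipolyI[where S="{()}" and e="\<lambda>_. (0, 1)" and k="\<lambda>_. 1"]) auto

lemma bipoly_scale: "bipoly m f \<Longrightarrow> bipoly m (\<lambda>x y. c * f x y)"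
  using bipoly_mult[OF bipoly_const[of 0 c]] by simp

lemma bipoly_diff: "bipoly m f \<Longrightarrow> bipoly m g \<Longrightarrow> bipoly m (\<lambda>x y. f x y - g x y)"
  using bipoly_add[of m f "\<lambda>x y. (- 1) * g x y"] bipoly_scale[of m g "- 1"] by simp

lemma bipoly_if: "bipoly m f \<Longrightarrow> bipoly m g \<Longrightarrow> bipoly m (\<lambda>x y. if b then f x y else g x y)"
  by (cases b) simp_all

lemma bipoly_sum:
  "finite I \<Longrightarrow> (\<And>i. i \<in> I \<Longrightarrow> bipoly m (f i)) \<Longrightarrow> bipoly m (\<lambda>x y. \<Sum>i\<in>I. f i x y)"
  by (induction I rule: finite_induct) (auto intro!: bipoly_add bipoly_const)

lemma bipoly_prod:
  "finite I \<Longrightarrow> (\<And>i. i \<in> I \<Longrightarrow> bipoly 1 (f i)) \<Longrightarrow> bipoly (card I) (\<lambda>x y. \<Prod>i\<in>I. f i x y)"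
proof (induction I rule: finite_induct)
  case (insert i F)
  then show ?case using bipoly_mult[of 1 "f i" "card F" "\<lambda>x y. \<Prod>i\<in>F. f i x y"] by simp
qed (use bipoly_const in simp)

lemma bipoly_explicit:
  assumes "bipoly m f"
  shows "\<exists>c :: nat \<Rightarrow> nat \<Rightarrow> real. \<forall>x y. f x y = (\<Sum>i\<le>m. \<Sum>j\<le>m-i. c i j * x ^ i * y ^ j)"
proof -
  obtain c where c: "\<And>x y. f x y = (\<Sum>p\<in>monomial_exps m. c p * x ^ fst p * y ^ snd p)"
    using assms unfolding bipoly_def by blast
  have exps: "monomial_exps m = Sigma {..m} (\<lambda>i. {..m-i})" by (auto simp: monomial_exps_def)
  show ?thesis
    by (rule exI[of _ "\<lambda>i j. c (i, j)"]) (simp add: c exps sum.Sigma case_prod_beta)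
qed

definition affine_coeffs :: "(real \<Rightarrow> real \<Rightarrow> real poly) \<Rightarrow> bool" where
  "affine_coeffs P \<longleftrightarrow> (\<forall>k. bipoly 1 (\<lambda>x y. coeff (P x y) k))"

lemma affine_coeffsI:
  assumes "\<And>x y. P x y = smult x A + smult y B + C"
  shows "affine_coeffs P"
  unfolding affine_coeffs_def
proof
  fix k
  have "bipoly (1 + 0) (\<lambda>x y. x * coeff A k)" "bipoly (1 + 0) (\<lambda>x y. y * coeff B k)"
    by (intro bipoly_mult bipoly_x bipoly_y bipoly_const)+
  then show "bipoly 1 (\<lambda>x y. coeff (P x y) k)"
    unfolding assms by (simp add: bipoly_add bipoly_const)
qed

lemma affine_coeffs_pderiv: "affine_coeffs P \<Longrightarrow> affine_coeffs (\<lambda>x y. pderiv (P x y))"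
  unfolding affine_coeffs_def by (simp add: coeff_pderiv bipoly_scale)

lemma affine_coeffs_euler_combination:
  assumes "affine_coeffs P"
  shows "affine_coeffs (\<lambda>x y. smult (of_nat N) (P x y) - [:0, 1:] * pderiv (P x y))"
  unfolding affine_coeffs_def
proof
  fix k
  have "coeff (smult (of_nat N) (P x y) - [:0, 1:] * pderiv (P x y)) k
      = of_nat N * coeff (P x y) k - (if k = 0 then 0 else coeff (pderiv (P x y)) (k - 1))" for x y
    by (cases k) auto
  then show "bipoly 1 (\<lambda>x y. coeff (smult (of_nat N) (P x y) - [:0, 1:] * pderiv (P x y)) k)"
    using assms affine_coeffs_pderiv[OF assms] unfolding affine_coeffs_def
    by (simp only:) (intro bipoly_diff bipoly_scale bipoly_if bipoly_const; simp)
qed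

text \<open>Expanding the determinant over permutations: a Sylvester matrix of size L with affine
  entries has a determinant of total degree at most L in (x, y).\<close>

lemma bipoly_det_sylvester:
  assumes A: "affine_coeffs A" and B: "affine_coeffs B"
  shows "bipoly (mA + mB) (\<lambda>x y. det (sylvester mA mB (A x y) (B x y)))"
proof -
  let ?L = "mA + mB"
  let ?S = "\<lambda>x y. sylvester mA mB (A x y) (B x y)"
  have entry: "bipoly 1 (\<lambda>x y. ?S x y $$ (i, j))" if "i < ?L" "j < ?L" for i j
  proof -
    have "(\<lambda>x y. ?S x y $$ (i, j)) = (\<lambda>x y.
       if i < mB then (if i \<le> j \<and> j - i \<le> mA then coeff (A x y) (j - i) else 0)
       else (if i - mB \<le> j \<and> j - (i - mB) \<le> mB then coeff (B x y) (j - (i - mB)) else 0))"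
      using that by (intro ext) (simp add: sylvester_def)
    then show ?thesis
      using A B unfolding affine_coeffs_def by (simp only:) (intro bipoly_if bipoly_const; simp)
  qed
  have "bipoly (card {0..<?L}) (\<lambda>x y. \<Sum>p\<in>{p. p permutes {0..<?L}}.
       signof p * (\<Prod>i\<in>{0..<?L}. ?S x y $$ (i, p i)))"
  proof (intro bipoly_sum bipoly_scale bipoly_prod finite_permutations)
    fix p i assume p: "p \<in> {p. p permutes {0..<?L}}" and i: "i \<in> {0..<?L}"
    then have "p i \<in> {0..<?L}" using permutes_in_image by fastforce
    then show "bipoly 1 (\<lambda>x y. ?S x y $$ (i, p i))" using i by (intro entry) auto
  qed auto
  moreover have "det (?S x y) = (\<Sum>p\<in>{p. p permutes {0..<?L}}.
       signof p * (\<Prod>i\<in>{0..<?L}. ?S x y $$ (i, p i)))" for x y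
    by (rule det_def') (simp add: sylvester_def)
  ultimately show ?thesis by simp
qed

text \<open>P depends affinely on (x, y): only the first two summands involve x and y.\<close>

lemma affine_coeffs_Ppoly: "affine_coeffs (Ppoly eta lam n d)"
proof (rule affine_coeffsI)
  fix x y
  show "Ppoly eta lam n d x y
      = smult x (smult (rho eta lam) (Qpoly eta lam n d div D1 eta lam d))
      + smult y (smult (rho eta lam) (Qpoly eta lam n d div D2 eta lam d))
      + (smult (2 * alpha eta * cot (alpha eta * kappa eta lam))
           ([:1, 0, 1:] ^ (n - d) * (Qpoly eta lam n d div D4 eta lam n d))
         - smult (2 * cot (kappa eta lam)) (Qpoly eta lam n d div D3 eta lam d))"
    by (simp add: Ppoly_def Let_def mult.commute)
qed

text \<open>The standing hypotheses of the theorem.\<close>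

locale arctic_parameters =
  fixes eta lam :: real and n d :: nat
  assumes eta_pos: "0 < eta" and eta_lt: "eta < pi / 2"
    and d_pos: "1 \<le> d" and d_lt_n: "d < n"
    and alpha_eq: "alpha eta = real n / real d"
    and lam_gt: "eta < lam" and lam_lt: "lam < pi - eta"
begin

abbreviation (input) \<kappa> :: real where "\<kappa> \<equiv> kappa eta lam"
abbreviation (input) \<alpha> :: real where "\<alpha> \<equiv> alpha eta"

lemma d_real_pos: "0 < real d" and n_real_pos: "0 < real n"
  using d_pos d_lt_n by simp_all

text \<open>Position of kappa: all angles occurring in g lie strictly between 0 and pi.\<close>

lemma kappa_pos: "0 < \<kappa>"
  using lam_lt by (simp add: kappa_def)

lemma kappa_eta: "\<kappa> + eta < pi / 2"
  using lam_gt by (simp add: kappa_def field_simps)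

lemma alpha_pos: "0 < \<alpha>"
  using alpha_eq d_real_pos n_real_pos by simp

lemma alpha_kappa: "\<alpha> * \<kappa> < pi / 2"
proof -
  have pos: "0 < pi - 2 * eta" using eta_lt by simp
  have "\<kappa> < (pi - 2 * eta) / 2" using lam_gt by (simp add: kappa_def)
  then have "\<kappa> / (pi - 2 * eta) < 1 / 2" using pos by (simp add: pos_divide_less_eq)
  then have "pi * (\<kappa> / (pi - 2 * eta)) < pi * (1 / 2)"
    using pi_gt_zero by (rule mult_strict_left_mono)
  moreover have "\<alpha> * \<kappa> = pi * (\<kappa> / (pi - 2 * eta))" by (simp add: alpha_def)
  ultimately show ?thesis by simp
qed

text \<open>The three families of nodes: the products over them, evaluated at t = cot(phi/d),
  telescope to the sines appearing in the denominators of g.\<close>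

lemma prod_vv:
  assumes s: "sin (phi / d) \<noteq> 0"
  shows "(\<Prod>k<d. cot (phi / d) - vv eta lam d k) = sin (\<kappa> - phi) / (sin (phi / d) ^ d * sin \<kappa>)"
    and "(\<Prod>k<d. cot (phi / d) + vv eta lam d k) = sin (\<kappa> + phi) / (sin (phi / d) ^ d * sin \<kappa>)"
proof -
  have c: "0 < \<kappa> / d" "\<kappa> / d < pi / d"
    using kappa_pos kappa_eta eta_pos d_real_pos by (simp_all add: divide_strict_right_mono)
  have e: "real d * (\<kappa> / d - phi / d) = \<kappa> - phi" "real d * (\<kappa> / d + phi / d) = \<kappa> + phi"
    "real d * (\<kappa> / d) = \<kappa>"
    using d_real_pos by (simp_all add: field_simps)
  show "(\<Prod>k<d. cot (phi / d) - vv eta lam d k) = sin (\<kappa> - phi) / (sin (phi / d) ^ d * sin \<kappa>)"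
    using prod_cot_shifted(1)[OF c s] unfolding vv_def e .
  show "(\<Prod>k<d. cot (phi / d) + vv eta lam d k) = sin (\<kappa> + phi) / (sin (phi / d) ^ d * sin \<kappa>)"
    using prod_cot_shifted(2)[OF c s] unfolding vv_def e .
qed

lemma prod_uu:
  assumes s: "sin (phi / d) \<noteq> 0"
  shows "(\<Prod>k<d. cot (phi / d) - uu eta lam d k)
           = sin (\<kappa> + 2 * eta - phi) / (sin (phi / d) ^ d * sin (\<kappa> + 2 * eta))"
    and "(\<Prod>k<d. cot (phi / d) + uu eta lam d k)
           = sin (\<kappa> + 2 * eta + phi) / (sin (phi / d) ^ d * sin (\<kappa> + 2 * eta))"
proof -
  have "\<kappa> + 2 * eta < pi" using kappa_eta eta_lt by linarith
  then have "(\<kappa> + 2 * eta) / d < pi / d" using d_real_pos by (rule divide_strict_right_mono)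
  then have c: "0 < \<kappa> / d + 2 * eta / d" "\<kappa> / d + 2 * eta / d < pi / d"
    using kappa_pos eta_pos d_real_pos by (simp_all add: add_pos_pos add_divide_distrib)
  have e: "real d * (\<kappa> / d + 2 * eta / d - phi / d) = \<kappa> + 2 * eta - phi"
    "real d * (\<kappa> / d + 2 * eta / d + phi / d) = \<kappa> + 2 * eta + phi"
    "real d * (\<kappa> / d + 2 * eta / d) = \<kappa> + 2 * eta"
    using d_real_pos by (simp_all add: field_simps)
  show "(\<Prod>k<d. cot (phi / d) - uu eta lam d k)
           = sin (\<kappa> + 2 * eta - phi) / (sin (phi / d) ^ d * sin (\<kappa> + 2 * eta))"
    using prod_cot_shifted(1)[OF c s] unfolding uu_def e .
  show "(\<Prod>k<d. cot (phi / d) + uu eta lam d k)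
           = sin (\<kappa> + 2 * eta + phi) / (sin (phi / d) ^ d * sin (\<kappa> + 2 * eta))"
    using prod_cot_shifted(2)[OF c s] unfolding uu_def e .
qed

lemma prod_ww:
  assumes s: "sin (phi / d) \<noteq> 0"
  shows "(\<Prod>j<n. cot (phi / d) - ww eta lam n d j)
           = sin (\<alpha> * (\<kappa> - phi)) / (sin (phi / d) ^ n * sin (\<alpha> * \<kappa>))"
    and "(\<Prod>j<n. cot (phi / d) + ww eta lam n d j)
           = sin (\<alpha> * (\<kappa> + phi)) / (sin (phi / d) ^ n * sin (\<alpha> * \<kappa>))"
proof -
  have "real n * \<kappa> / real d < pi / 2"
    using alpha_kappa alpha_eq by simp
  then have "real n * \<kappa> < pi * real d / 2"
    using d_real_pos by (simp add: pos_divide_less_eq)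
  then have "real n * \<kappa> < pi * real d"
    using mult_pos_pos[OF pi_gt_zero d_real_pos] by linarith
  then have c: "0 < \<kappa> / d" "\<kappa> / d < pi / n"
    using kappa_pos d_real_pos n_real_pos by (simp_all add: field_simps)
  have e: "real n * (\<kappa> / d - phi / d) = \<alpha> * (\<kappa> - phi)"
    "real n * (\<kappa> / d + phi / d) = \<alpha> * (\<kappa> + phi)" "real n * (\<kappa> / d) = \<alpha> * \<kappa>"
    using alpha_eq d_real_pos by (simp_all add: field_simps)
  show "(\<Prod>j<n. cot (phi / d) - ww eta lam n d j)
           = sin (\<alpha> * (\<kappa> - phi)) / (sin (phi / d) ^ n * sin (\<alpha> * \<kappa>))"
    using prod_cot_shifted(1)[OF c s] unfolding ww_def e .
  show "(\<Prod>j<n. cot (phi / d) + ww eta lam n d j)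
           = sin (\<alpha> * (\<kappa> + phi)) / (sin (phi / d) ^ n * sin (\<alpha> * \<kappa>))"
    using prod_cot_shifted(2)[OF c s] unfolding ww_def e .
qed

lemma poly_denominators_at_cot:
  assumes s: "sin (phi / d) \<noteq> 0"
  defines "t \<equiv> cot (phi / d)" and "S \<equiv> sin (phi / d)"
  shows "poly (D1 eta lam d) t
           = sin (\<kappa> - phi) / (S ^ d * sin \<kappa>) * (sin (\<kappa> + 2 * eta - phi) / (S ^ d * sin (\<kappa> + 2 * eta)))"
    and "poly (D2 eta lam d) t
           = sin (\<kappa> + phi) / (S ^ d * sin \<kappa>) * (sin (\<kappa> + 2 * eta + phi) / (S ^ d * sin (\<kappa> + 2 * eta)))"
    and "poly (D3 eta lam d) t = sin (\<kappa> - phi) / (S ^ d * sin \<kappa>) * (sin (\<kappa> + phi) / (S ^ d * sin \<kappa>))"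
    and "poly (D4 eta lam n d) t
           = sin (\<alpha> * (\<kappa> - phi)) / (S ^ n * sin (\<alpha> * \<kappa>)) * (sin (\<alpha> * (\<kappa> + phi)) / (S ^ n * sin (\<alpha> * \<kappa>)))"
  unfolding t_def S_def D1_def D2_def D3_def D4_def
  by (simp_all add: poly_prod prod.distrib prod_vv[OF s] prod_uu[OF s] prod_ww[OF s])

text \<open>The coincidences v_0 = w_0 and u_{d-1} = w_{n-1} (this is where 2 eta = pi (n - d) / n is used)
  make every denominator D_i a divisor of Q, so the quotients in the definition of P are exact.\<close>

lemma vv_first: "vv eta lam d 0 = ww eta lam n d 0"
  by (simp add: vv_def ww_def)

lemma uu_last: "uu eta lam d (d - 1) = ww eta lam n d (n - 1)"
proof -
  have "pi * real d = real n * (pi - 2 * eta)"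
    using alpha_eq d_real_pos eta_lt by (simp add: alpha_def field_simps)
  then have two_eta: "2 * eta = pi * (real n - real d) / real n"
    using n_real_pos by (simp add: field_simps)
  have "2 * eta / d + pi * real (d - 1) / d = pi * real (n - 1) / n"
    using d_pos d_lt_n d_real_pos n_real_pos unfolding two_eta
    by (simp add: field_simps)
  then show ?thesis unfolding uu_def ww_def by (simp add: add.assoc)
qed

lemma Qpoly_eq: "Qpoly eta lam n d = D4 eta lam n d
    * (\<Prod>k\<in>{1..<d}. lin_minus (vv eta lam d k) * lin_plus (vv eta lam d k))
    * (\<Prod>k<d - 1. lin_minus (uu eta lam d k) * lin_plus (uu eta lam d k))"
  by (simp add: Qpoly_def D4_def)

lemma end_nodes_dvd_D4:
  assumes "\<And>c. L c dvd lin_minus c * lin_plus c"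
  shows "L (ww eta lam n d 0) * L (ww eta lam n d (n - 1)) dvd D4 eta lam n d"
proof -
  let ?f = "\<lambda>j. lin_minus (ww eta lam n d j) * lin_plus (ww eta lam n d j)"
  have "?f 0 * ?f (n - 1) dvd D4 eta lam n d"
    unfolding D4_def using d_pos d_lt_n by (intro two_factors_dvd_prod) auto
  then show ?thesis using assms by (meson dvd_trans mult_dvd_mono)
qed

lemma D_same_sign_dvd_Q:
  assumes L: "\<And>c. L c dvd lin_minus c * lin_plus c"
  shows "(\<Prod>k<d. L (vv eta lam d k) * L (uu eta lam d k)) dvd Qpoly eta lam n d"
proof -
  have d0: "0 < d" using d_pos by simp
  have "(\<Prod>k<d. L (vv eta lam d k) * L (uu eta lam d k))
      = (\<Prod>k<d. L (vv eta lam d k)) * (\<Prod>k<d. L (uu eta lam d k))"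
    by (rule prod.distrib)
  also have "\<dots> = (L (vv eta lam d 0) * (\<Prod>k\<in>{1..<d}. L (vv eta lam d k)))
      * (L (uu eta lam d (d - 1)) * (\<Prod>k<d - 1. L (uu eta lam d k)))"
    by (simp only: prod_split_first[OF d0, of "\<lambda>k. L (vv eta lam d k)"]
        prod_split_last[OF d0, of "\<lambda>k. L (uu eta lam d k)"])
  also have "\<dots> = (L (ww eta lam n d 0) * L (ww eta lam n d (n - 1)))
        * (\<Prod>k\<in>{1..<d}. L (vv eta lam d k)) * (\<Prod>k<d - 1. L (uu eta lam d k))"
    by (simp only: vv_first uu_last mult_ac)
  also have "\<dots> dvd Qpoly eta lam n d"
    unfolding Qpoly_eq using L
    by (intro mult_dvd_mono end_nodes_dvd_D4 prod_dvd_prod) auto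
  finally show ?thesis .
qed

lemma D_dvd_Q:
  shows "D1 eta lam d dvd Qpoly eta lam n d" and "D2 eta lam d dvd Qpoly eta lam n d"
    and "D3 eta lam d dvd Qpoly eta lam n d" and "D4 eta lam n d dvd Qpoly eta lam n d"
proof -
  show "D1 eta lam d dvd Qpoly eta lam n d"
    unfolding D1_def by (rule D_same_sign_dvd_Q) simp
  show "D2 eta lam d dvd Qpoly eta lam n d"
    unfolding D2_def by (rule D_same_sign_dvd_Q) simp
  have "D3 eta lam d = (lin_minus (ww eta lam n d 0) * lin_plus (ww eta lam n d 0))
      * (\<Prod>k\<in>{1..<d}. lin_minus (vv eta lam d k) * lin_plus (vv eta lam d k))"
    using d_pos by (simp add: D3_def prod_split_first vv_first)
  also have "\<dots> dvd Qpoly eta lam n d"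
    unfolding Qpoly_eq D4_def using d_lt_n by (intro dvd_mult2 mult_dvd_mono dvd_prodI) auto
  finally show "D3 eta lam d dvd Qpoly eta lam n d" .
  show "D4 eta lam n d dvd Qpoly eta lam n d"
    unfolding Qpoly_eq by simp
qed

text \<open>Degree count: deg Q = 2n + 4d - 4, and each term of P has degree at most N = 2n + 2d - 4.\<close>

lemma degree_Ppoly: "degree (Ppoly eta lam n d x y) \<le> Nn n d"
proof -
  let ?Q = "Qpoly eta lam n d"
  have Q: "degree ?Q = 2 * n + 4 * d - 4" "?Q \<noteq> 0"
    using d_pos by (simp_all add: Qpoly_def degree_prod_sum_eq degree_mult_eq)
  have quot: "degree (?Q div D1 eta lam d) = Nn n d" "degree (?Q div D2 eta lam d) = Nn n d"
    "degree (?Q div D3 eta lam d) = Nn n d" "degree (?Q div D4 eta lam n d) = 4 * d - 4"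
    using D_dvd_Q d_pos by (simp_all add: degree_exact_quotient Q D1_def D2_def D3_def D4_def
        degree_prod_sum_eq degree_mult_eq Nn_def)
  have "degree ([:1, 0, 1:] ^ (n - d) :: real poly) \<le> 2 * (n - d)"
    using degree_power_le[of "[:1, 0, 1:] :: real poly" "n - d"] by simp
  then have "degree ([:1, 0, 1:] ^ (n - d) * (?Q div D4 eta lam n d)) \<le> 2 * (n - d) + (4 * d - 4)"
    using quot(4) by (intro order_trans[OF degree_mult_le]) simp
  also have "\<dots> = Nn n d" using d_pos d_lt_n by (simp add: Nn_def)
  finally show ?thesis unfolding Ppoly_def Let_def
    by (intro degree_add_le degree_diff_le order_trans[OF degree_smult_le]) (simp_all add: quot)
qed

lemma sines_positive:
  assumes "- \<kappa> < phi" "phi < \<kappa>"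
  shows "0 < sin \<kappa>" "0 < sin (\<kappa> + 2 * eta)" "0 < sin (\<kappa> - phi)" "0 < sin (\<kappa> + phi)"
    "0 < sin (\<kappa> + 2 * eta - phi)" "0 < sin (\<kappa> + 2 * eta + phi)"
    "0 < sin (\<alpha> * \<kappa>)" "0 < sin (\<alpha> * (\<kappa> - phi))" "0 < sin (\<alpha> * (\<kappa> + phi))"
proof -
  have "\<alpha> * (\<kappa> - phi) < \<alpha> * (2 * \<kappa>)" "\<alpha> * (\<kappa> + phi) < \<alpha> * (2 * \<kappa>)"
    using assms alpha_pos by (simp_all add: mult_strict_left_mono)
  moreover have "0 < \<alpha> * (\<kappa> - phi)" "0 < \<alpha> * (\<kappa> + phi)" "0 < \<alpha> * \<kappa>"
    using assms alpha_pos kappa_pos by simp_all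
  ultimately show "0 < sin \<kappa>" "0 < sin (\<kappa> + 2 * eta)" "0 < sin (\<kappa> - phi)" "0 < sin (\<kappa> + phi)"
    "0 < sin (\<kappa> + 2 * eta - phi)" "0 < sin (\<kappa> + 2 * eta + phi)"
    "0 < sin (\<alpha> * \<kappa>)" "0 < sin (\<alpha> * (\<kappa> - phi))" "0 < sin (\<alpha> * (\<kappa> + phi))"
    using assms kappa_pos kappa_eta eta_pos alpha_kappa by (auto intro!: sin_gt_zero)
qed

lemma sin_phi_over_d_nonzero:
  assumes "- \<kappa> < phi" "phi < \<kappa>" "phi \<noteq> 0"
  shows "sin (phi / d) \<noteq> 0"
proof
  assume zero: "sin (phi / d) = 0"
  have "\<bar>phi\<bar> * 1 \<le> \<bar>phi\<bar> * real d" using d_pos by (intro mult_left_mono) auto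
  then have "\<bar>phi / d\<bar> \<le> \<bar>phi\<bar>" using d_real_pos by (simp add: abs_div divide_le_eq)
  then have "- pi < phi / d" "phi / d < pi" using assms kappa_eta eta_pos by linarith+
  from sin_eq_0_pi[OF this zero] show False using assms(3) d_real_pos by simp
qed

text \<open>The key identity P(cot(phi/d)) = Q(cot(phi/d)) sin(phi/d)^(2d) g(phi): it is here that the
  telescoped products turn each summand of R into the corresponding summand of g.\<close>

lemma poly_Ppoly_at_cot:
  assumes phi: "- \<kappa> < phi" "phi < \<kappa>" "phi \<noteq> 0"
  shows "poly (Ppoly eta lam n d x y) (cot (phi / d))
       = poly (Qpoly eta lam n d) (cot (phi / d)) * sin (phi / d) ^ (2 * d) * gfun eta lam x y phi"
proof -
  define s where "s = sin (phi / d)"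
  define t where "t = cot (phi / d)"
  define q where "q = poly (Qpoly eta lam n d) t"
  have s0: "s \<noteq> 0" unfolding s_def by (rule sin_phi_over_d_nonzero[OF phi])
  note pos = sines_positive[OF phi(1,2)]
  note D = poly_denominators_at_cot[OF s0[unfolded s_def], folded s_def t_def]
  have D_nonzero: "poly (D1 eta lam d) t \<noteq> 0" "poly (D2 eta lam d) t \<noteq> 0"
    "poly (D3 eta lam d) t \<noteq> 0" "poly (D4 eta lam n d) t \<noteq> 0"
    unfolding D using pos s0 by auto
  have s2d: "s ^ (2 * d) = s ^ d * s ^ d" by (simp add: mult_2 power_add)
  have term1: "x * rho eta lam * (q / poly (D1 eta lam d) t)
      = q * s ^ (2 * d) * (x * sin (2 * eta) / (sin (\<kappa> - phi) * sin (\<kappa> + 2 * eta - phi)))"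
    unfolding D s2d rho_def using pos s0 by (simp add: field_simps)
  have term2: "y * rho eta lam * (q / poly (D2 eta lam d) t)
      = q * s ^ (2 * d) * (y * sin (2 * eta) / (sin (\<kappa> + phi) * sin (\<kappa> + 2 * eta + phi)))"
    unfolding D s2d rho_def using pos s0 by (simp add: field_simps)
  have term3: "2 * cot \<kappa> * (q / poly (D3 eta lam d) t)
      = q * s ^ (2 * d) * (sin (2 * \<kappa>) / (sin (\<kappa> + phi) * sin (\<kappa> - phi)))"
    unfolding D s2d sin_double using pos s0 by (simp add: field_simps cot_def)
  have term4: "2 * \<alpha> * cot (\<alpha> * \<kappa>) * ((1 / s ^ 2) ^ (n - d) * (q / poly (D4 eta lam n d) t))
      = q * s ^ (2 * d) * (\<alpha> * sin (2 * \<alpha> * \<kappa>) / (sin (\<alpha> * (\<kappa> + phi)) * sin (\<alpha> * (\<kappa> - phi))))"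
  proof -
    have "n + n = 2 * (n - d) + 2 * d" using d_lt_n by simp
    then have "s ^ n * s ^ n = s ^ (2 * (n - d)) * s ^ (2 * d)" by (metis power_add)
    then have "(1 / s ^ 2) ^ (n - d) * (s ^ n * s ^ n) = s ^ (2 * d)"
      using s0 by (simp add: power_mult power_one_over)
    moreover have "sin (2 * \<alpha> * \<kappa>) = 2 * sin (\<alpha> * \<kappa>) * cos (\<alpha> * \<kappa>)"
      using sin_double[of "\<alpha> * \<kappa>"] by (simp add: mult.assoc)
    ultimately show ?thesis unfolding D using pos s0 by (simp add: cot_def field_simps)
  qed
  have quadratic: "poly [:1, 0, 1:] t = 1 / s ^ 2"
    using s0 by (simp add: t_def s_def cot_def field_simps power2_eq_square)
  have "poly (Ppoly eta lam n d x y) t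
      = x * rho eta lam * (q / poly (D1 eta lam d) t) + y * rho eta lam * (q / poly (D2 eta lam d) t)
        - 2 * cot \<kappa> * (q / poly (D3 eta lam d) t)
        + 2 * \<alpha> * cot (\<alpha> * \<kappa>) * ((1 / s ^ 2) ^ (n - d) * (q / poly (D4 eta lam n d) t))"
    unfolding Ppoly_def Let_def q_def
    using D_nonzero D_dvd_Q quadratic by (simp add: poly_exact_quotient)
  also have "\<dots> = q * s ^ (2 * d) * gfun eta lam x y phi"
    unfolding term1 term2 term3 term4 gfun_def Let_def by (simp add: algebra_simps)
  finally show ?thesis by (simp add: t_def q_def s_def)
qed

lemma double_root_transfer:
  assumes phi: "- \<kappa> < phi" "phi < \<kappa>" "phi \<noteq> 0"
    and g0: "gfun eta lam x y phi = 0" and g1: "(gfun eta lam x y has_real_derivative 0) (at phi)"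
  shows "poly (Ppoly eta lam n d x y) (cot (phi / d)) = 0"
    and "poly (pderiv (Ppoly eta lam n d x y)) (cot (phi / d)) = 0"
proof -
  let ?P = "Ppoly eta lam n d x y"
  define h where "h psi = poly (Qpoly eta lam n d) (cot (psi / d)) * sin (psi / d) ^ (2 * d)" for psi
  define S where "S = {- \<kappa> <..< \<kappa>} - {0}"
  have s0: "sin (phi / d) \<noteq> 0" by (rule sin_phi_over_d_nonzero[OF phi])
  have S: "open S" "phi \<in> S" using phi by (auto simp: S_def)
  have factor: "poly ?P (cot (psi / d)) = gfun eta lam x y psi * h psi" if "psi \<in> S" for psi
    using poly_Ppoly_at_cot[of psi] that by (auto simp: S_def h_def mult_ac)
  show "poly ?P (cot (phi / d)) = 0" using factor[OF S(2)] g0 by simp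
  have "(\<lambda>psi. poly (Qpoly eta lam n d) (cot (psi / d))) differentiable (at phi)"
    using DERIV_poly_cot[OF s0] by (auto simp: real_differentiable_def)
  moreover have "(\<lambda>psi. sin (psi / d) ^ (2 * d)) differentiable (at phi)"
    unfolding real_differentiable_def
    by (rule exI) (use d_pos in \<open>auto intro!: derivative_eq_intros\<close>)
  ultimately have "h differentiable (at phi)" unfolding h_def by simp
  then have "((\<lambda>psi. poly ?P (cot (psi / d))) has_real_derivative 0) (at phi)"
    using DERIV_zero_product[OF g1 g0 _ S factor] by blast
  from DERIV_unique[OF DERIV_poly_cot[OF s0] this]
  show "poly (pderiv ?P) (cot (phi / d)) = 0" using s0 d_real_pos by simp
qed

text \<open>Upsilon is (up to sign) the resultant of P~ = N P - t P' and P' in formal degree N - 1,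
  so it vanishes as soon as P has a double root.\<close>

lemma Upsilon_vanishes_at_double_root:
  assumes "poly (Ppoly eta lam n d x y) t = 0" "poly (pderiv (Ppoly eta lam n d x y)) t = 0"
  shows "Upsilon eta lam n d x y = 0"
proof -
  let ?N = "Nn n d"
  let ?P = "Ppoly eta lam n d x y"
  have deg: "degree ?P \<le> ?N" by (rule degree_Ppoly)
  have "det (sylvester (?N - 1) (?N - 1) (smult (of_nat ?N) ?P - [:0, 1:] * pderiv ?P) (pderiv ?P)) = 0"
  proof (rule sylvester_det_common_root)
    show "degree (smult (of_nat ?N) ?P - [:0, 1:] * pderiv ?P) \<le> ?N - 1"
      by (rule degree_euler_combination[OF deg])
    show "degree (pderiv ?P) \<le> ?N - 1" using deg by (simp add: degree_pderiv)
    show "poly (smult (of_nat ?N) ?P - [:0, 1:] * pderiv ?P) t = 0" using assms by simp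
    show "0 < ?N - 1 + (?N - 1)" using d_pos d_lt_n by (simp add: Nn_def)
  qed (rule assms(2))
  then show ?thesis by (simp add: Upsilon_def Let_def)
qed

lemma Upsilon_polynomial: "bipoly (4 * (n + d) - 10) (Upsilon eta lam n d)"
proof -
  define N where "N = Nn n d"
  have "bipoly ((N - 1) + (N - 1)) (\<lambda>x y. (- 1) ^ (N * (N - 1) div 2) * det (sylvester (N - 1) (N - 1)
      (smult (of_nat N) (Ppoly eta lam n d x y) - [:0, 1:] * pderiv (Ppoly eta lam n d x y))
      (pderiv (Ppoly eta lam n d x y))))"
    by (intro bipoly_scale bipoly_det_sylvester affine_coeffs_euler_combination
        affine_coeffs_pderiv affine_coeffs_Ppoly)
  moreover have "(N - 1) + (N - 1) = 4 * (n + d) - 10"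
    using d_pos d_lt_n by (simp add: N_def Nn_def)
  moreover have "Upsilon eta lam n d = (\<lambda>x y. (- 1) ^ (N * (N - 1) div 2) * det (sylvester (N - 1) (N - 1)
      (smult (of_nat N) (Ppoly eta lam n d x y) - [:0, 1:] * pderiv (Ppoly eta lam n d x y))
      (pderiv (Ppoly eta lam n d x y))))"
    by (intro ext) (simp add: Upsilon_def N_def Let_def)
  ultimately show ?thesis by simp
qed

end

theorem corollary1:
  fixes eta lam :: real and n d :: nat
  assumes "0 < eta" "eta < pi / 2"
    and "1 \<le> d" "d < n" "coprime n d"
    and "alpha eta = real n / real d"
    and "eta < lam" "lam < pi - eta"
  shows "(\<exists>c :: nat \<Rightarrow> nat \<Rightarrow> real. \<forall>x y.
            Upsilon eta lam n d x y =
              (\<Sum>i\<le>4*(n+d)-10. \<Sum>j\<le>4*(n+d)-10-i. c i j * x ^ i * y ^ j))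
       \<and> (\<forall>x y. (\<exists>phi. - kappa eta lam < phi \<and> phi < kappa eta lam \<and> phi \<noteq> 0
                   \<and> gfun eta lam x y phi = 0
                   \<and> (gfun eta lam x y has_real_derivative 0) (at phi))
                \<longrightarrow> Upsilon eta lam n d x y = 0)"
proof
  interpret arctic_parameters eta lam n d
    using assms by unfold_locales
  show "\<exists>c :: nat \<Rightarrow> nat \<Rightarrow> real. \<forall>x y. Upsilon eta lam n d x y
      = (\<Sum>i\<le>4*(n+d)-10. \<Sum>j\<le>4*(n+d)-10-i. c i j * x ^ i * y ^ j)"
    using Upsilon_polynomial by (rule bipoly_explicit)
  show "\<forall>x y. (\<exists>phi. - kappa eta lam < phi \<and> phi < kappa eta lam \<and> phi \<noteq> 0
                   \<and> gfun eta lam x y phi = 0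
                   \<and> (gfun eta lam x y has_real_derivative 0) (at phi))
                \<longrightarrow> Upsilon eta lam n d x y = 0"
    using double_root_transfer Upsilon_vanishes_at_double_root by blast
qed

end
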